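(* Let $K\ge1$ and let $\omega\in\mathbb{T}$ be irrational with $\beta(\omega)>40K$. Then for every $\theta\in\mathbb{T}$, $H_{K,\theta,\omega}$ has no eigenvalues in $[0,4e^{K\|f\|_\infty}]$.
   Context: $\mathbb{T}=\mathbb{R}/\mathbb{Z}$. $f:\mathbb{T}\to\mathbb{R}$ is a non-constant real-analytic function with zero mean and $\|f\|_{C^1}=1$. $V(\theta)=\exp(Kf(\theta+\omega))+\exp(-Kf(\theta))$, and $(H_{K,\theta,\omega}u)_n=-u_{n+1}-u_{n-1}+V(\theta+n\omega)u_n$ on $\ell^2(\mathbb{Z})$. For irrational $\omega$ with continued fraction approximants $p_n/q_n$, $\beta(\omega)=\limsup_n\frac{\log q_{n+1}}{q_n}$. *)

theory Defs
  imports "HOL-Analysis.Analysis" "HOL-Library.Extended_Real"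
begin

text \<open>Functions on the torus T = R/Z are represented as 1-periodic functions R -> R.\<close>

definition periodic1 :: "(real \<Rightarrow> real) \<Rightarrow> bool" where
  "periodic1 f \<longleftrightarrow> (\<forall>x. f (x + 1) = f x)"

definition real_analytic :: "(real \<Rightarrow> real) \<Rightarrow> bool" where
  "real_analytic f \<longleftrightarrow>
     (\<forall>x. \<exists>r>0. \<exists>a::nat \<Rightarrow> real. \<forall>y. \<bar>y - x\<bar> < r \<longrightarrow> (\<lambda>n. a n * (y - x) ^ n) sums f y)"

definition sup_norm :: "(real \<Rightarrow> real) \<Rightarrow> real" where
  "sup_norm f = (SUP x. \<bar>f x\<bar>)"

definition C1_norm :: "(real \<Rightarrow> real) \<Rightarrow> real" where
  "C1_norm f = sup_norm f + sup_norm (deriv f)"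

text \<open>Continued fraction expansion: complete quotients, partial quotients,
  and denominators q_n of the convergents p_n/q_n (q_0 = 1, q_1 = a_1,
  q_{n+2} = a_{n+2} q_{n+1} + q_n).\<close>
fun cf_rem :: "real \<Rightarrow> nat \<Rightarrow> real" where
  "cf_rem x 0 = x"
| "cf_rem x (Suc n) = 1 / frac (cf_rem x n)"

definition cf_a :: "real \<Rightarrow> nat \<Rightarrow> int" where
  "cf_a x n = \<lfloor>cf_rem x n\<rfloor>"

fun cf_q :: "real \<Rightarrow> nat \<Rightarrow> int" where
  "cf_q x 0 = 1"
| "cf_q x (Suc 0) = cf_a x 1"
| "cf_q x (Suc (Suc n)) = cf_a x (Suc (Suc n)) * cf_q x (Suc n) + cf_q x n"

definition beta_exp :: "real \<Rightarrow> ereal" where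
  "beta_exp \<omega> = limsup (\<lambda>n. ereal (ln (real_of_int (cf_q \<omega> (Suc n))) / real_of_int (cf_q \<omega> n)))"

definition potential :: "real \<Rightarrow> (real \<Rightarrow> real) \<Rightarrow> real \<Rightarrow> real \<Rightarrow> real" where
  "potential K f \<omega> \<theta> = exp (K * f (\<theta> + \<omega>)) + exp (- K * f \<theta>)"

definition is_eigenvalue_H :: "real \<Rightarrow> (real \<Rightarrow> real) \<Rightarrow> real \<Rightarrow> real \<Rightarrow> real \<Rightarrow> bool" where
  "is_eigenvalue_H K f \<theta> \<omega> E \<longleftrightarrow>
     (\<exists>u :: int \<Rightarrow> complex. u \<noteq> (\<lambda>_. 0) \<and> (\<lambda>n. (norm (u n))\<^sup>2) summable_on UNIV \<and>
        (\<forall>n. - u (n + 1) - u (n - 1) + complex_of_real (potential K f \<omega> (\<theta> + real_of_int n * \<omega>)) * u n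
              = complex_of_real E * u n))"

end

theory Submission
  imports Defs
begin

lemma real_analytic_local_deriv:
  assumes "real_analytic f"
  obtains r g' where "r > 0" "\<And>y. \<bar>y - x\<bar> < r \<Longrightarrow> (f has_real_derivative g' y) (at y)" "isCont g' x"
proof -
  obtain r a where "r > 0" and sums: "\<And>y. \<bar>y - x\<bar> < r \<Longrightarrow> (\<lambda>n. a n * (y - x) ^ n) sums f y"
    using assms unfolding real_analytic_def by blast
  define g' where "g' h = (\<Sum>n. diffs a n * h ^ n)" for h :: real
  have summable: "summable (\<lambda>n. a n * h ^ n)" if "norm h < r" for h
    using sums[of "x + h"] that by (simp add: sums_summable)
  have "(f has_real_derivative g' (y - x)) (at y)" if "\<bar>y - x\<bar> < r" for y
  proof -
    have "((\<lambda>h. \<Sum>n. a n * h ^ n) has_real_derivative g' (y - x)) (at (y - x))"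
      unfolding g'_def by (rule termdiffs_strong'[of r]) (use summable that in auto)
    then have "((\<lambda>z. \<Sum>n. a n * (z - x) ^ n) has_real_derivative g' (y - x)) (at y)"
      using DERIV_shift[of "\<lambda>h. \<Sum>n. a n * h ^ n" "g' (y - x)" y "- x"] by simp
    then show ?thesis
    proof (rule has_field_derivative_transform_within_open[where S = "ball x r"])
      show "\<And>z. z \<in> ball x r \<Longrightarrow> (\<Sum>n. a n * (z - x) ^ n) = f z"
        using sums by (auto simp: dist_real_def abs_minus_commute sums_iff)
    qed (use that in \<open>auto simp: dist_real_def abs_minus_commute\<close>)
  qed
  moreover have "isCont (\<lambda>y. g' (y - x)) x"
  proof -
    have "summable (\<lambda>n. diffs a n * (r / 2) ^ n)"
      by (rule termdiff_converges[of _ r]) (use \<open>r > 0\<close> summable in auto)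
    then have "isCont g' 0"
      unfolding g'_def by (rule isCont_powser) (use \<open>r > 0\<close> in auto)
    then show ?thesis by (intro isCont_o2[where f = "\<lambda>y. y - x" and g = g']) (auto intro: continuous_intros)
  qed
  ultimately show ?thesis using that[of r "\<lambda>y. g' (y - x)"] \<open>r > 0\<close> by blast
qed

lemma real_analytic_C1:
  assumes "real_analytic f"
  shows "(f has_real_derivative deriv f x) (at x)" and "isCont (deriv f) x"
proof -
  obtain r g' where "r > 0" and d: "\<And>y. \<bar>y - x\<bar> < r \<Longrightarrow> (f has_real_derivative g' y) (at y)"
    and "isCont g' x"
    using real_analytic_local_deriv[OF assms] by blast
  from d[of x] \<open>r > 0\<close> have "(f has_real_derivative g' x) (at x)" by simp
  then show "(f has_real_derivative deriv f x) (at x)" by (simp add: DERIV_imp_deriv)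
  have "continuous (at x within UNIV) (deriv f)"
  proof (rule continuous_transform_within[where f = g' and \<delta> = r])
    show "g' y = deriv f y" if "y \<in> UNIV" "dist y x < r" for y
      using DERIV_imp_deriv[OF d] that by (simp add: dist_real_def)
  qed (use \<open>isCont g' x\<close> \<open>r > 0\<close> in auto)
  then show "isCont (deriv f) x" by simp
qed

lemma periodic1_add_int:
  assumes "periodic1 g" shows "g (x + real_of_int n) = g x"
proof (induction n rule: int_induct[where k = 0])
  case (step1 i)
  have "g (x + real_of_int (i + 1)) = g ((x + real_of_int i) + 1)" by (simp add: add.assoc)
  then show ?case using assms step1 unfolding periodic1_def by simp
next
  case (step2 i)
  have "g (x + real_of_int (i - 1)) = g ((x + real_of_int (i - 1)) + 1)"
    using assms unfolding periodic1_def by metis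
  also have "\<dots> = g (x + real_of_int i)" by (simp add: algebra_simps)
  finally show ?case using step2 by simp
qed simp

lemma abs_le_sup_norm_periodic1:
  assumes "periodic1 g" "\<And>x. isCont g x"
  shows "\<bar>g x\<bar> \<le> sup_norm g"
proof -
  have "continuous_on {0..1} g"
    using assms(2) by (simp add: continuous_at_imp_continuous_on)
  then have "bounded (g ` {0..1})"
    by (intro compact_imp_bounded compact_continuous_image) (simp_all add: compact_Icc)
  then obtain M where M: "\<And>z. z \<in> g ` {0..1} \<Longrightarrow> norm z \<le> M"
    unfolding bounded_iff by blast
  have "\<bar>g y\<bar> \<le> M" for y
  proof -
    have "frac y \<in> {0..1}" by (simp add: frac_lt_1 less_imp_le)
    then have "\<bar>g (frac y)\<bar> \<le> M" using M by simp
    moreover have "g (frac y) = g y"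
      using periodic1_add_int[OF assms(1), of "frac y" "\<lfloor>y\<rfloor>"] by (simp add: frac_def)
    ultimately show ?thesis by simp
  qed
  then show ?thesis
    unfolding sup_norm_def by (rule cSUP_upper[OF UNIV_I bdd_aboveI2])
qed


lemma periodic1_deriv:
  assumes "periodic1 f" "\<And>x. (f has_real_derivative deriv f x) (at x)"
  shows "periodic1 (deriv f)"
  unfolding periodic1_def
proof
  fix x
  have "((\<lambda>y. f (y + 1)) has_real_derivative deriv f (x + 1)) (at x)"
    using assms(2)[of "x + 1"] DERIV_shift[of f "deriv f (x + 1)" x 1] by simp
  moreover have "(\<lambda>y. f (y + 1)) = f" using assms(1) unfolding periodic1_def by auto
  ultimately show "deriv f (x + 1) = deriv f x" by (simp add: DERIV_imp_deriv)
qed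

lemma C1_norm_eq_1_bounds:
  assumes "periodic1 f" "real_analytic f" "C1_norm f = 1"
  shows "\<And>x. \<bar>f x\<bar> \<le> sup_norm f" and "sup_norm f \<le> 1" and "\<And>x. \<bar>deriv f x\<bar> \<le> 1"
proof -
  note C1 = real_analytic_C1[OF assms(2)]
  show f_le: "\<bar>f x\<bar> \<le> sup_norm f" for x
    by (rule abs_le_sup_norm_periodic1[OF assms(1)]) (use C1(1) DERIV_isCont in blast)
  have f'_le: "\<bar>deriv f x\<bar> \<le> sup_norm (deriv f)" for x
    by (rule abs_le_sup_norm_periodic1[OF periodic1_deriv[OF assms(1) C1(1)] C1(2)])
  show "sup_norm f \<le> 1" "\<bar>deriv f x\<bar> \<le> 1" for x
    using f_le[of 0] f'_le[of 0] f'_le[of x] assms(3) unfolding C1_norm_def by linarith+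
qed

lemma periodic1_potential:
  assumes "periodic1 f" shows "periodic1 (potential K f \<omega>)"
proof -
  have "f (x + 1 + \<omega>) = f (x + \<omega>)" for x
    using assms unfolding periodic1_def by (metis add.assoc add.commute)
  then show ?thesis using assms unfolding periodic1_def potential_def by simp
qed

lemma potential_bounds:
  assumes "\<And>y. \<bar>f y\<bar> \<le> S" and "K \<ge> 0"
  shows "0 < potential K f \<omega> t" and "potential K f \<omega> t \<le> 2 * exp (K * S)"
proof -
  have KS: "\<bar>K * f y\<bar> \<le> K * S" for y
    using mult_left_mono[OF assms(1)[of y] assms(2)] assms(2) by (simp add: abs_mult)
  have "exp (K * f (t + \<omega>)) \<le> exp (K * S)" "exp (- K * f t) \<le> exp (K * S)"
    using KS[of "t + \<omega>"] KS[of t] by (simp_all add: abs_le_iff)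
  then show "potential K f \<omega> t \<le> 2 * exp (K * S)"
    unfolding potential_def by linarith
qed (simp add: potential_def add_pos_pos)

lemma potential_lipschitz:
  assumes deriv: "\<And>y. (f has_real_derivative f' y) (at y)"
    and f_le: "\<And>y. \<bar>f y\<bar> \<le> 1" and f'_le: "\<And>y. \<bar>f' y\<bar> \<le> 1" and "K \<ge> 0"
  shows "\<bar>potential K f \<omega> s - potential K f \<omega> t\<bar> \<le> 2 * K * exp K * \<bar>s - t\<bar>"
proof -
  define V' where "V' y = exp (K * f (y + \<omega>)) * (K * f' (y + \<omega>)) - exp (- K * f y) * (K * f' y)" for y
  have "(potential K f \<omega> has_real_derivative V' y) (at y)" for y
  proof -
    have "((\<lambda>y. f (y + \<omega>)) has_real_derivative f' (y + \<omega>)) (at y)"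
      using deriv[of "y + \<omega>"] DERIV_shift[of f "f' (y + \<omega>)" y \<omega>] by simp
    then have "((\<lambda>y. exp (K * f (y + \<omega>))) has_real_derivative exp (K * f (y + \<omega>)) * (K * f' (y + \<omega>))) (at y)"
      by (intro DERIV_fun_exp DERIV_cmult)
    moreover have "((\<lambda>y. exp (- K * f y)) has_real_derivative exp (- K * f y) * (- K * f' y)) (at y)"
      by (intro DERIV_fun_exp DERIV_cmult deriv)
    ultimately have "((\<lambda>y. exp (K * f (y + \<omega>)) + exp (- K * f y)) has_real_derivative
        exp (K * f (y + \<omega>)) * (K * f' (y + \<omega>)) + exp (- K * f y) * (- K * f' y)) (at y)"
      by (rule DERIV_add)
    then show ?thesis by (simp add: potential_def[abs_def] V'_def)
  qed
  moreover have "\<bar>V' y\<bar> \<le> 2 * K * exp K" for y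
  proof -
    have "\<bar>exp (s * K * f z) * (K * f' z)\<bar> \<le> exp K * K" if "\<bar>s\<bar> = 1" for s z
    proof -
      have "\<bar>s * K * f z\<bar> \<le> K"
        using f_le[of z] \<open>K \<ge> 0\<close> that by (simp add: abs_mult mult_left_le)
      then have "exp (s * K * f z) \<le> exp K" by simp
      moreover have "\<bar>K * f' z\<bar> \<le> K"
        using f'_le[of z] \<open>K \<ge> 0\<close> by (simp add: abs_mult mult_left_le)
      ultimately show ?thesis
        using mult_mono[of _ "exp K" "\<bar>K * f' z\<bar>" K] by (simp add: abs_mult)
    qed
    from this[of 1 "y + \<omega>"] this[of "-1" y]
    have "\<bar>exp (K * f (y + \<omega>)) * (K * f' (y + \<omega>))\<bar> \<le> exp K * K"
      "\<bar>exp (- K * f y) * (K * f' y)\<bar> \<le> exp K * K"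
      by simp_all
    then have "\<bar>V' y\<bar> \<le> exp K * K + exp K * K"
      unfolding V'_def using abs_triangle_ineq4[of "exp (K * f (y + \<omega>)) * (K * f' (y + \<omega>))"
        "exp (- K * f y) * (K * f' y)"] by linarith
    then show ?thesis by simp
  qed
  ultimately show ?thesis
    using field_differentiable_bound[of UNIV "potential K f \<omega>" V' "2 * K * exp K" s t] by auto
qed

fun cf_p :: "real \<Rightarrow> nat \<Rightarrow> int" where
  "cf_p x 0 = cf_a x 0"
| "cf_p x (Suc 0) = cf_a x 1 * cf_a x 0 + 1"
| "cf_p x (Suc (Suc n)) = cf_a x (Suc (Suc n)) * cf_p x (Suc n) + cf_p x n"

definition cf_residual :: "real \<Rightarrow> nat \<Rightarrow> real" where
  "cf_residual x n = (\<Prod>i\<le>n. frac (cf_rem x i))"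

declare cf_rem.simps(2)[simp del]

context
  fixes x :: real
  assumes irrational: "x \<notin> \<rat>"
begin

lemma cf_rem_not_rat: "cf_rem x n \<notin> \<rat>"
proof (induction n)
  case 0 then show ?case using irrational by simp
next
  case (Suc n)
  have "frac (cf_rem x n) \<notin> \<rat>"
  proof
    assume "frac (cf_rem x n) \<in> \<rat>"
    then have "frac (cf_rem x n) + \<lfloor>cf_rem x n\<rfloor> \<in> \<rat>" by simp
    then show False using Suc by (simp add: frac_def)
  qed
  then show ?case by (simp add: cf_rem.simps(2) divide_inverse)
qed

lemma frac_cf_rem_pos: "0 < frac (cf_rem x n)"
  using cf_rem_not_rat[of n] Ints_subset_Rats frac_ge_0 frac_eq_0_iff by (metis order_le_less subsetD)

lemma cf_rem_Suc_mult_frac: "cf_rem x (Suc n) * frac (cf_rem x n) = 1"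
  using frac_cf_rem_pos[of n] by (simp add: cf_rem.simps(2))

lemma cf_a_Suc_ge_1: "cf_a x (Suc n) \<ge> 1"
proof -
  have "cf_rem x (Suc n) > 1"
    using frac_cf_rem_pos[of n] frac_lt_1[of "cf_rem x n"] by (simp add: cf_rem.simps(2))
  then show ?thesis unfolding cf_a_def by (simp add: le_floor_iff)
qed

lemma cf_q_ge: "int n \<le> cf_q x n \<and> 0 < cf_q x n"
proof (rule cf_q.induct[of "\<lambda>_ m. int m \<le> cf_q x m \<and> 0 < cf_q x m"])
  fix y :: real and m :: nat
  assume IH: "int m \<le> cf_q x m \<and> 0 < cf_q x m" "int (Suc m) \<le> cf_q x (Suc m) \<and> 0 < cf_q x (Suc m)"
  have "cf_q x (Suc m) \<le> cf_a x (Suc (Suc m)) * cf_q x (Suc m)"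
    using cf_a_Suc_ge_1[of "Suc m"] IH(2) by (simp add: mult_le_cancel_right1)
  moreover have "cf_q x (Suc (Suc m)) = cf_a x (Suc (Suc m)) * cf_q x (Suc m) + cf_q x m" by simp
  ultimately show "int (Suc (Suc m)) \<le> cf_q x (Suc (Suc m)) \<and> 0 < cf_q x (Suc (Suc m))"
    using IH by linarith
qed (use cf_a_Suc_ge_1[of 0] in auto)

lemma cf_residual_pos: "cf_residual x n > 0"
  unfolding cf_residual_def using frac_cf_rem_pos by (intro prod_pos) blast

lemma cf_residual_Suc: "cf_residual x (Suc n) = cf_residual x n * frac (cf_rem x (Suc n))"
  unfolding cf_residual_def by (simp add: atMost_Suc mult.commute)

lemma cf_residual_0_1:
  "cf_residual x 0 = x - cf_a x 0"
  "cf_residual x 1 = cf_residual x 0 * (cf_rem x 1 - cf_a x 1)"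
  "cf_rem x 1 * cf_residual x 0 = 1"
  using cf_residual_Suc[of 0] cf_rem_Suc_mult_frac[of 0]
  by (simp_all add: cf_residual_def cf_a_def frac_def)

lemma cf_residual_Suc_Suc:
  "cf_residual x (Suc (Suc n)) = cf_residual x n - cf_a x (Suc (Suc n)) * cf_residual x (Suc n)"
proof -
  have "cf_residual x (Suc n) * cf_rem x (Suc (Suc n)) = cf_residual x n"
    using cf_rem_Suc_mult_frac[of "Suc n"] by (simp add: cf_residual_Suc algebra_simps)
  then show ?thesis by (simp add: cf_residual_Suc cf_a_def frac_def algebra_simps)
qed

lemma cf_q_mult_sub_cf_p:
  "cf_q x n * x - cf_p x n = (-1) ^ n * cf_residual x n \<and>
   cf_q x (Suc n) * x - cf_p x (Suc n) = (-1) ^ Suc n * cf_residual x (Suc n)"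
proof (induction n)
  case 0
  have "cf_q x 1 * x - cf_p x 1 = - cf_residual x 1"
    using cf_residual_0_1 by simp algebra
  then show ?case using cf_residual_0_1(1) by simp
next
  case (Suc n)
  define a where "a = real_of_int (cf_a x (Suc (Suc n)))"
  have "cf_q x (Suc (Suc n)) * x - cf_p x (Suc (Suc n))
      = a * (cf_q x (Suc n) * x - cf_p x (Suc n)) + (cf_q x n * x - cf_p x n)"
    by (simp add: a_def algebra_simps)
  also have "\<dots> = a * ((-1) ^ Suc n * cf_residual x (Suc n)) + (-1) ^ n * cf_residual x n"
    using Suc by simp
  also have "\<dots> = (-1) ^ Suc (Suc n) * cf_residual x (Suc (Suc n))"
    by (simp add: cf_residual_Suc_Suc a_def algebra_simps)
  finally show ?case using Suc by simp
qed

lemma cf_q_residual_sum: "cf_q x (Suc n) * cf_residual x n + cf_q x n * cf_residual x (Suc n) = 1"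
proof (induction n)
  case 0
  show ?case using cf_residual_0_1 by simp algebra
next
  case (Suc n)
  then show ?case by (simp add: cf_residual_Suc_Suc algebra_simps)
qed

lemma cf_q_approximation: "\<exists>p::int. \<bar>cf_q x n * x - p\<bar> * cf_q x (Suc n) \<le> 1"
proof
  have "\<bar>cf_q x n * x - cf_p x n\<bar> = cf_residual x n"
    using cf_q_mult_sub_cf_p[of n] cf_residual_pos[of n] by (simp add: abs_mult)
  moreover have "cf_q x n * cf_residual x (Suc n) \<ge> 0"
    using cf_q_ge[of n] cf_residual_pos[of "Suc n"] by simp
  ultimately show "\<bar>cf_q x n * x - cf_p x n\<bar> * cf_q x (Suc n) \<le> 1"
    using cf_q_residual_sum[of n] by (simp add: mult.commute)
qed

end

lemma eventually_linear_times_power_le_exp: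
  fixes B c C :: real
  assumes "0 < B" "B\<^sup>2 < exp c"
  shows "eventually (\<lambda>q. C * real q * B ^ (2 * q) \<le> exp (c * real q)) sequentially"
proof -
  define \<rho> where "\<rho> = B\<^sup>2 / exp c"
  have "0 < \<rho>" "\<rho> < 1" using assms unfolding \<rho>_def by auto
  then have "(\<lambda>q. C * (real q * \<rho> ^ q)) \<longlonglongrightarrow> 0"
    by (intro tendsto_mult_right_zero powser_times_n_limit_0) simp
  then have "eventually (\<lambda>q. C * (real q * \<rho> ^ q) < 1) sequentially"
    by (rule order_tendstoD) simp
  then show ?thesis
  proof (rule eventually_mono)
    fix q assume "C * (real q * \<rho> ^ q) < 1"
    have "C * real q * B ^ (2 * q) = C * (real q * \<rho> ^ q) * exp c ^ q"
      by (simp add: \<rho>_def power_mult power_divide)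
    also have "\<dots> \<le> exp c ^ q"
      using \<open>C * (real q * \<rho> ^ q) < 1\<close> by simp
    also have "\<dots> = exp (c * real q)"
      by (simp add: exp_of_nat_mult[symmetric] mult.commute)
    finally show "C * real q * B ^ (2 * q) \<le> exp (c * real q)" .
  qed
qed

lemma beta_exp_good_approximations:
  assumes "\<omega> \<notin> \<rat>" and "beta_exp \<omega> > ereal c"
  shows "\<exists>q\<ge>N. \<exists>p::int. exp (c * real q) * \<bar>real q * \<omega> - p\<bar> \<le> 1"
proof -
  let ?r = "\<lambda>k. ereal (ln (real_of_int (cf_q \<omega> (Suc k))) / real_of_int (cf_q \<omega> k))"
  obtain y where "ereal c < y" and not_below: "\<not> eventually (\<lambda>k. ?r k < y) sequentially"
    using assms(2) Limsup_le_iff[where C = "ereal c" and F = sequentially and X = ?r] unfolding beta_exp_def by auto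
  have "frequently (\<lambda>k. ereal c < ?r k) sequentially"
    using not_below unfolding not_eventually
    by (rule frequently_elim1) (use \<open>ereal c < y\<close> in \<open>metis not_less order.strict_trans2\<close>)
  then have "\<exists>k\<ge>max N 1. ereal c < ?r k"
    unfolding frequently_sequentially by (rule spec)
  then obtain k where "k \<ge> max N 1" and k: "c < ln (cf_q \<omega> (Suc k)) / cf_q \<omega> k"
    by auto
  define q where "q = nat (cf_q \<omega> k)"
  define Q where "Q = real_of_int (cf_q \<omega> (Suc k))"
  have q: "real q = cf_q \<omega> k" "q \<ge> k" "Q > 0"
    using cf_q_ge[OF assms(1), of k] cf_q_ge[OF assms(1), of "Suc k"] by (auto simp: q_def Q_def)
  then have "c * real q < ln Q" using k \<open>k \<ge> max N 1\<close> by (simp add: Q_def field_simps)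
  then have "exp (c * real q) < Q" using \<open>Q > 0\<close> by (metis exp_less_mono exp_ln)
  moreover obtain p :: int where "\<bar>real q * \<omega> - p\<bar> * Q \<le> 1"
    using cf_q_approximation[OF assms(1), of k] q(1) unfolding Q_def by auto
  ultimately have "exp (c * real q) * \<bar>real q * \<omega> - p\<bar> \<le> 1"
    by (smt (verit) abs_ge_zero mult.commute mult_right_mono)
  moreover have "q \<ge> N" using q \<open>k \<ge> max N 1\<close> by simp
  ultimately show ?thesis by blast
qed

definition entrywise_norm :: "'a::real_normed_field^'n^'m \<Rightarrow> real" where
  "entrywise_norm A = (\<Sum>i\<in>UNIV. \<Sum>j\<in>UNIV. norm (A $ i $ j))"

lemma entrywise_norm_nonneg: "entrywise_norm A \<ge> 0"
  unfolding entrywise_norm_def by (intro sum_nonneg) simp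

lemma norm_vec_le_sum: "norm (x :: 'a::real_normed_vector^'n) \<le> (\<Sum>i\<in>UNIV. norm (x $ i))"
  unfolding norm_vec_def by (rule L2_set_le_sum) simp

lemma entry_norm_le_entrywise_norm: "norm (A $ i $ j) \<le> entrywise_norm A"
proof -
  have "norm (A $ i $ j) \<le> (\<Sum>j\<in>UNIV. norm (A $ i $ j))"
    by (rule member_le_sum) auto
  also have "\<dots> \<le> entrywise_norm A"
    unfolding entrywise_norm_def by (rule member_le_sum[where f = "\<lambda>i. \<Sum>j\<in>UNIV. norm (A $ i $ j)"]) (auto intro: sum_nonneg)
  finally show ?thesis .
qed

lemma norm_mult_vec_le: "norm (A *v x) \<le> entrywise_norm A * norm x"
proof -
  have "norm ((A *v x) $ i) \<le> (\<Sum>j\<in>UNIV. norm (A $ i $ j) * norm x)" for i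
  proof -
    have "norm ((A *v x) $ i) \<le> (\<Sum>j\<in>UNIV. norm (A $ i $ j * x $ j))"
      unfolding matrix_vector_mult_def by (simp add: norm_sum)
    also have "\<dots> \<le> (\<Sum>j\<in>UNIV. norm (A $ i $ j) * norm x)"
      using Finite_Cartesian_Product.norm_nth_le[of x] by (intro sum_mono) (simp add: norm_mult mult_left_mono)
    finally show ?thesis .
  qed
  then have "(\<Sum>i\<in>UNIV. norm ((A *v x) $ i)) \<le> entrywise_norm A * norm x"
    unfolding entrywise_norm_def sum_distrib_right by (intro sum_mono) simp
  then show ?thesis using norm_vec_le_sum[of "A *v x"] by linarith
qed

lemma entrywise_norm_mult_le: "entrywise_norm (A ** B) \<le> entrywise_norm A * entrywise_norm B"
proof -
  have "entrywise_norm (A ** B) \<le> (\<Sum>i\<in>UNIV. \<Sum>k\<in>UNIV. \<Sum>j\<in>UNIV. norm (A $ i $ j) * norm (B $ j $ k))"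
    unfolding entrywise_norm_def matrix_matrix_mult_def
    by (intro sum_mono) (simp add: norm_mult[symmetric] norm_sum)
  also have "\<dots> = (\<Sum>i\<in>UNIV. \<Sum>j\<in>UNIV. norm (A $ i $ j) * (\<Sum>k\<in>UNIV. norm (B $ j $ k)))"
    by (intro sum.cong refl, subst sum.swap) (simp add: sum_distrib_left)
  also have "\<dots> \<le> (\<Sum>i\<in>UNIV. \<Sum>j\<in>UNIV. norm (A $ i $ j) * entrywise_norm B)"
    unfolding entrywise_norm_def
    by (intro sum_mono mult_left_mono member_le_sum[where f = "\<lambda>j. \<Sum>k\<in>UNIV. norm (B $ j $ k)"])
      (auto intro: sum_nonneg)
  finally show ?thesis by (simp add: entrywise_norm_def sum_distrib_right)
qed

lemma entrywise_norm_add_le: "entrywise_norm (A + B) \<le> entrywise_norm A + entrywise_norm B"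
  unfolding entrywise_norm_def sum.distrib[symmetric] by (intro sum_mono) (simp add: norm_triangle_ineq)

lemma norm_scalar_mult_vec: "norm (c *s x) = norm c * norm (x :: 'a::real_normed_field^'n)"
  unfolding norm_vec_def by (simp add: norm_mult L2_set_right_distrib)

definition adj2 :: "'a::comm_ring_1^2^2 \<Rightarrow> 'a^2^2" where
  "adj2 A = vector [vector [A$2$2, - A$1$2], vector [- A$2$1, A$1$1]]"

lemma adj2_mult_vec: "adj2 A *v (A *v x) = det A *s x"
  by (simp add: vec_eq_iff forall_2 adj2_def det_2 matrix_vector_mult_def sum_2 algebra_simps)

lemma mult_vec_add_adj2: "A *v x + adj2 A *v x = trace A *s x"
  by (simp add: vec_eq_iff forall_2 adj2_def trace_def matrix_vector_mult_def sum_2 algebra_simps)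

lemma cayley_hamilton_2: "A *v (A *v x) = trace A *s (A *v x) - det A *s (x :: 'a::comm_ring_1^2)"
  by (simp add: vec_eq_iff forall_2 det_2 trace_def matrix_vector_mult_def sum_2 algebra_simps)

lemma entrywise_norm_adj2_diff:
  "entrywise_norm (adj2 A - adj2 B) = entrywise_norm (A - B :: 'a::real_normed_field^2^2)"
  by (simp add: entrywise_norm_def adj2_def sum_2 norm_minus_commute)

lemma gordon_two_by_two:
  fixes T :: "'a::real_normed_field^2^2"
  assumes "det T = 1"
  shows "norm x \<le> 2 * max (norm (T *v x)) (max (norm (T *v (T *v x))) (norm (adj2 T *v x)))"
proof (cases "norm (trace T) \<le> 1")
  case True
  have "x = trace T *s (T *v x) - T *v (T *v x)"
    using cayley_hamilton_2[of T x] assms by simp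
  then have "norm x \<le> norm (trace T *s (T *v x)) + norm (T *v (T *v x))"
    using norm_triangle_ineq4[of "trace T *s (T *v x)" "T *v (T *v x)"] by simp
  then have "norm x \<le> norm (trace T) * norm (T *v x) + norm (T *v (T *v x))"
    by (simp add: norm_scalar_mult_vec)
  also have "\<dots> \<le> norm (T *v x) + norm (T *v (T *v x))"
    using True by (simp add: mult_left_le_one_le)
  finally show ?thesis by linarith
next
  case False
  have "norm x \<le> norm (trace T) * norm x"
    using False by (simp add: mult_le_cancel_right1)
  also have "\<dots> = norm (T *v x + adj2 T *v x)"
    by (simp add: mult_vec_add_adj2 norm_scalar_mult_vec)
  also have "\<dots> \<le> norm (T *v x) + norm (adj2 T *v x)"
    by (rule norm_triangle_ineq)
  finally show ?thesis by linarith
qed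

fun mat_left_prod :: "(nat \<Rightarrow> 'a::semiring_1^'n^'n) \<Rightarrow> nat \<Rightarrow> 'a^'n^'n" where
  "mat_left_prod F 0 = mat 1"
| "mat_left_prod F (Suc k) = F k ** mat_left_prod F k"

lemma det_mat_left_prod: "(\<And>i. i < k \<Longrightarrow> det (F i) = 1) \<Longrightarrow> det (mat_left_prod F k) = 1"
  by (induction k) (simp_all add: det_mul)

lemma entrywise_norm_mat_1: "entrywise_norm (mat 1 :: 'a::real_normed_field^'n^'n) = CARD('n)"
  by (simp add: entrywise_norm_def mat_def if_distrib cong: if_cong)

lemma entrywise_norm_mat_left_prod_le:
  fixes F :: "nat \<Rightarrow> 'a::real_normed_field^'n^'n" and B :: real
  assumes "\<And>i. i < k \<Longrightarrow> entrywise_norm (F i) \<le> B"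
  shows "entrywise_norm (mat_left_prod F k) \<le> CARD('n) * B ^ k"
  using assms
proof (induction k)
  case 0 then show ?case by (simp add: entrywise_norm_mat_1)
next
  case (Suc k)
  have "0 \<le> B" using Suc.prems[of k] entrywise_norm_nonneg[of "F k"] by linarith
  have "entrywise_norm (mat_left_prod F (Suc k)) \<le> entrywise_norm (F k) * entrywise_norm (mat_left_prod F k)"
    by (simp add: entrywise_norm_mult_le)
  also have "\<dots> \<le> B * (CARD('n) * B ^ k)"
    using Suc \<open>0 \<le> B\<close> by (intro mult_mono) (auto simp: entrywise_norm_nonneg)
  finally show ?case by (simp add: algebra_simps)
qed

lemma matrix_mult_diff_split:
  fixes F G P Q :: "'a::comm_ring_1^'n^'n"
  shows "F ** P - G ** Q = F ** (P - Q) + (F - G) ** Q"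
  by (simp add: vec_eq_iff matrix_matrix_mult_def sum_subtractf sum.distrib[symmetric] algebra_simps)

lemma entrywise_norm_mat_left_prod_diff_le:
  fixes F G :: "nat \<Rightarrow> 'a::real_normed_field^'n^'n" and B \<epsilon> :: real
  assumes "\<And>i. i < k \<Longrightarrow> entrywise_norm (F i) \<le> B" "\<And>i. i < k \<Longrightarrow> entrywise_norm (G i) \<le> B"
    and "\<And>i. i < k \<Longrightarrow> entrywise_norm (F i - G i) \<le> \<epsilon>" and "B \<ge> 1"
  shows "entrywise_norm (mat_left_prod F k - mat_left_prod G k) \<le> real CARD('n) * real k * B ^ k * \<epsilon>"
  using assms
proof (induction k)
  case 0 then show ?case by (simp add: entrywise_norm_def)
next
  case (Suc k)
  have \<epsilon>: "\<epsilon> \<ge> 0" using Suc.prems(3)[of 0] entrywise_norm_nonneg order_trans by blast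
  have "entrywise_norm (mat_left_prod F (Suc k) - mat_left_prod G (Suc k))
     \<le> entrywise_norm (F k) * entrywise_norm (mat_left_prod F k - mat_left_prod G k)
       + entrywise_norm (F k - G k) * entrywise_norm (mat_left_prod G k)"
    unfolding mat_left_prod.simps matrix_mult_diff_split
    by (rule order_trans[OF entrywise_norm_add_le add_mono[OF entrywise_norm_mult_le entrywise_norm_mult_le]])
  also have "\<dots> \<le> B * (real CARD('n) * real k * B ^ k * \<epsilon>) + \<epsilon> * (real CARD('n) * B ^ k)"
    using Suc \<epsilon> by (intro add_mono mult_mono entrywise_norm_mat_left_prod_le)
      (auto simp: entrywise_norm_nonneg)
  also have "\<dots> \<le> real CARD('n) * real (Suc k) * B ^ Suc k * \<epsilon>"
  proof -
    have "B ^ k \<le> B ^ Suc k"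
      using \<open>B \<ge> 1\<close> by (intro power_increasing) auto
    then have "\<epsilon> * (real CARD('n) * B ^ k) \<le> \<epsilon> * (real CARD('n) * B ^ Suc k)"
      using \<epsilon> by (intro mult_left_mono) auto
    moreover have "real CARD('n) * real (Suc k) * B ^ Suc k * \<epsilon>
        = B * (real CARD('n) * real k * B ^ k * \<epsilon>) + \<epsilon> * (real CARD('n) * B ^ Suc k)"
      by (simp add: algebra_simps)
    ultimately show ?thesis by linarith
  qed
  finally show ?case .
qed

definition transfer_matrix :: "(int \<Rightarrow> 'a::comm_ring_1) \<Rightarrow> int \<Rightarrow> 'a^2^2" where
  "transfer_matrix W n = vector [vector [W n, -1], vector [1, 0]]"

definition state_vec :: "(int \<Rightarrow> 'a::zero) \<Rightarrow> int \<Rightarrow> 'a^2" where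
  "state_vec u n = vector [u (n + 1), u n]"

lemma det_transfer_matrix: "det (transfer_matrix W n) = 1"
  by (simp add: transfer_matrix_def det_2)

lemma entrywise_norm_transfer_matrix:
  "entrywise_norm (transfer_matrix W n) = norm (W n) + 2"
  by (simp add: entrywise_norm_def transfer_matrix_def sum_2)

lemma entrywise_norm_transfer_matrix_diff:
  "entrywise_norm (transfer_matrix W m - transfer_matrix W n) = norm (W m - W n)"
  by (simp add: entrywise_norm_def transfer_matrix_def sum_2)

lemma state_vec_transfer:
  fixes u W :: "int \<Rightarrow> 'a::comm_ring_1"
  assumes rec: "\<And>n. u (n + 1) + u (n - 1) = W n * u n"
  shows "state_vec u (m + int k) = mat_left_prod (\<lambda>i. transfer_matrix W (m + 1 + int i)) k *v state_vec u m"
proof (induction k)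
  case 0 then show ?case by simp
next
  case (Suc k)
  have "u (m + int k + 2) = W (m + int k + 1) * u (m + int k + 1) - u (m + int k)"
    using rec[of "m + int k + 1"] by (simp add: algebra_simps)
  then have "state_vec u (m + int (Suc k)) = transfer_matrix W (m + 1 + int k) *v state_vec u (m + int k)"
    by (simp add: vec_eq_iff forall_2 state_vec_def transfer_matrix_def matrix_vector_mult_def sum_2 algebra_simps)
  then show ?case using Suc by (simp add: matrix_vector_mul_assoc)
qed

lemma gordon_estimate:
  fixes u W :: "int \<Rightarrow> 'a::real_normed_field" and q :: nat and B \<epsilon> :: real
  assumes rec: "\<And>n. u (n + 1) + u (n - 1) = W n * u n"
    and W_bound: "\<And>n. norm (W n) + 2 \<le> B"
    and W_repeat: "\<And>n. norm (W (n + int q) - W n) \<le> \<epsilon>"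
    and small: "32 * real q * B ^ (2 * q) * \<epsilon> \<le> 1"
  shows "norm (state_vec u 0) \<le> 4 * max (norm (state_vec u (int q)))
           (max (norm (state_vec u (2 * int q))) (norm (state_vec u (- int q))))" (is "_ \<le> 4 * ?M")
proof -
  define x where "x = state_vec u 0"
  define P where "P m = mat_left_prod (\<lambda>i. transfer_matrix W (m + 1 + int i)) q" for m
  define \<delta> where "\<delta> = 2 * q * B ^ q * \<epsilon>"
  have "0 \<le> \<epsilon>" using W_repeat[of 0] norm_ge_zero order_trans by blast
  have "1 \<le> B" using W_bound[of 0] norm_ge_zero[of "W 0"] by linarith
  then have "1 \<le> 2 * B ^ q" using one_le_power[of B q] by linarith
  have A_bound: "entrywise_norm (transfer_matrix W n) \<le> B" for n
    using W_bound by (simp add: entrywise_norm_transfer_matrix)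
  have det_P: "det (P m) = 1" for m
    unfolding P_def by (rule det_mat_left_prod) (simp add: det_transfer_matrix)
  have P_bound: "entrywise_norm (P 0) \<le> 2 * B ^ q"
    unfolding P_def using entrywise_norm_mat_left_prod_le[OF A_bound] by simp
  have P_close: "entrywise_norm (P (m + int q) - P m) \<le> \<delta>" for m
  proof -
    have step: "entrywise_norm (transfer_matrix W (m + int q + 1 + int i) - transfer_matrix W (m + 1 + int i)) \<le> \<epsilon>" for i
      using W_repeat[of "m + 1 + int i"] by (simp add: entrywise_norm_transfer_matrix_diff ac_simps)
    have "entrywise_norm (P (m + int q) - P m) \<le> real CARD(2) * real q * B ^ q * \<epsilon>"
      unfolding P_def by (intro entrywise_norm_mat_left_prod_diff_le A_bound \<open>1 \<le> B\<close> step)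
    then show ?thesis by (simp add: \<delta>_def)
  qed
  have fwd: "state_vec u (int q) = P 0 *v x" "state_vec u (2 * int q) = P (int q) *v state_vec u (int q)"
    using state_vec_transfer[OF rec, of 0 q] state_vec_transfer[OF rec, of "int q" q]
    by (simp_all add: P_def x_def)
  have "x = P (- int q) *v state_vec u (- int q)"
    using state_vec_transfer[OF rec, of "- int q" q] by (simp add: P_def x_def)
  then have bwd: "state_vec u (- int q) = adj2 (P (- int q)) *v x"
    using adj2_mult_vec[of "P (- int q)"] det_P by simp
  define err where "err = \<delta> * (2 * B ^ q * norm x)"
  have "0 \<le> \<delta>" using \<open>0 \<le> \<epsilon>\<close> \<open>1 \<le> B\<close> by (simp add: \<delta>_def)
  have "0 \<le> err" using \<open>0 \<le> \<delta>\<close> \<open>1 \<le> B\<close> by (simp add: err_def)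
  have "norm (P 0 *v x) \<le> 2 * B ^ q * norm x"
    using norm_mult_vec_le[of "P 0" x] mult_right_mono[OF P_bound norm_ge_zero[of x]] by linarith
  have double: "norm (P 0 *v (P 0 *v x)) \<le> norm (state_vec u (2 * int q)) + err"
  proof -
    let ?D = "P (int q) - P 0"
    have "norm (?D *v (P 0 *v x)) \<le> entrywise_norm ?D * norm (P 0 *v x)"
      by (rule norm_mult_vec_le)
    also have "\<dots> \<le> err"
      unfolding err_def using P_close[of 0] \<open>norm (P 0 *v x) \<le> 2 * B ^ q * norm x\<close> \<open>0 \<le> \<delta>\<close>
      by (intro mult_mono) simp_all
    moreover have "P 0 *v (P 0 *v x) = P (int q) *v (P 0 *v x) - ?D *v (P 0 *v x)"
      by (simp add: matrix_vector_mult_diff_rdistrib)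
    then have "norm (P 0 *v (P 0 *v x)) \<le> norm (P (int q) *v (P 0 *v x)) + norm (?D *v (P 0 *v x))"
      using norm_triangle_ineq4[of "P (int q) *v (P 0 *v x)" "?D *v (P 0 *v x)"] by simp
    ultimately show ?thesis using fwd by simp
  qed
  have inverse: "norm (adj2 (P 0) *v x) \<le> norm (state_vec u (- int q)) + err"
  proof -
    let ?D = "adj2 (P 0) - adj2 (P (- int q))"
    have "norm (?D *v x) \<le> entrywise_norm (P 0 - P (- int q)) * norm x"
      using norm_mult_vec_le[of ?D x] by (simp add: entrywise_norm_adj2_diff)
    also have "\<dots> \<le> \<delta> * norm x"
      using P_close[of "- int q"] by (intro mult_right_mono) simp_all
    also have "\<dots> \<le> err"
      unfolding err_def using mult_right_mono[OF \<open>1 \<le> 2 * B ^ q\<close> norm_ge_zero[of x]] \<open>0 \<le> \<delta>\<close>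
      by (intro mult_left_mono) simp_all
    moreover have "adj2 (P 0) *v x = adj2 (P (- int q)) *v x + ?D *v x"
      by (simp add: matrix_vector_mult_diff_rdistrib)
    then have "norm (adj2 (P 0) *v x) \<le> norm (adj2 (P (- int q)) *v x) + norm (?D *v x)"
      using norm_triangle_ineq[of "adj2 (P (- int q)) *v x" "?D *v x"] by simp
    ultimately show ?thesis using bwd by simp
  qed
  have err_small: "2 * err \<le> norm x / 4"
  proof -
    have "B ^ (2 * q) = B ^ q * B ^ q" by (simp add: mult_2 power_add)
    then have "2 * err = (32 * q * B ^ (2 * q) * \<epsilon>) * norm x / 4"
      by (simp add: err_def \<delta>_def)
    then show ?thesis using mult_right_mono[OF small norm_ge_zero[of x]] by linarith
  qed
  have M: "norm (state_vec u (int q)) \<le> ?M" "norm (state_vec u (2 * int q)) \<le> ?M"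
    "norm (state_vec u (- int q)) \<le> ?M"
    by simp_all
  have "norm (P 0 *v x) \<le> ?M + err" using M(1) \<open>0 \<le> err\<close> unfolding fwd(1) by linarith
  moreover have "norm (P 0 *v (P 0 *v x)) \<le> ?M + err" using double M(2) by linarith
  moreover have "norm (adj2 (P 0) *v x) \<le> ?M + err" using inverse M(3) by linarith
  ultimately have "max (norm (P 0 *v x)) (max (norm (P 0 *v (P 0 *v x))) (norm (adj2 (P 0) *v x))) \<le> ?M + err"
    by simp
  moreover have "norm x \<le> 2 * max (norm (P 0 *v x)) (max (norm (P 0 *v (P 0 *v x))) (norm (adj2 (P 0) *v x)))"
    by (rule gordon_two_by_two[OF det_P])
  ultimately show ?thesis using err_small M(1) norm_ge_zero[of "state_vec u (int q)"] unfolding x_def by linarith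
qed

lemma solution_eq_0_of_state_vec_0:
  fixes u W :: "int \<Rightarrow> 'a::comm_ring_1"
  assumes rec: "\<And>n. u (n + 1) + u (n - 1) = W n * u n" and "state_vec u 0 = 0"
  shows "u = (\<lambda>_. 0)"
proof -
  have "u n = 0 \<and> u (n + 1) = 0" for n
  proof (induction n rule: int_induct[where k = 0])
    case base show ?case using assms(2) by (simp add: state_vec_def vec_eq_iff forall_2)
  next
    case (step1 i) then show ?case using rec[of "i + 1"] by simp
  next
    case (step2 i) then show ?case using rec[of i] by simp
  qed
  then show ?thesis by auto
qed

lemma finite_large_of_square_summable:
  fixes u :: "'b \<Rightarrow> 'a::real_normed_vector"
  assumes "(\<lambda>n. (norm (u n))\<^sup>2) summable_on UNIV" and "\<eta> > 0"
  shows "finite {n. \<eta> \<le> norm (u n)}"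
proof -
  let ?g = "\<lambda>n. (norm (u n))\<^sup>2"
  have "card F \<le> nat \<lfloor>infsum ?g UNIV / \<eta>\<^sup>2\<rfloor>" if "F \<subseteq> {n. \<eta> \<le> norm (u n)}" "finite F" for F
  proof -
    have "card F * \<eta>\<^sup>2 = (\<Sum>n\<in>F. \<eta>\<^sup>2)" by simp
    also have "\<dots> \<le> sum ?g F"
      using that \<open>\<eta> > 0\<close> by (intro sum_mono power_mono) auto
    also have "\<dots> = infsum ?g F" using \<open>finite F\<close> by simp
    also have "\<dots> \<le> infsum ?g UNIV"
      by (rule infsum_mono_neutral) (use assms(1) \<open>finite F\<close> in auto)
    finally show ?thesis using \<open>\<eta> > 0\<close> by (intro le_nat_floor) (simp add: pos_le_divide_eq)
  qed
  then show ?thesis using finite_if_finite_subsets_card_bdd by blast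
qed

theorem gordon_no_square_summable_solution:
  fixes u W :: "int \<Rightarrow> 'a::real_normed_field" and B :: real
  assumes rec: "\<And>n. u (n + 1) + u (n - 1) = W n * u n"
    and W_bound: "\<And>n. norm (W n) + 2 \<le> B"
    and W_repeat: "\<And>N. \<exists>q\<ge>N. \<forall>n. 32 * real q * B ^ (2 * q) * norm (W (n + int q) - W n) \<le> 1"
    and l2: "(\<lambda>n. (norm (u n))\<^sup>2) summable_on UNIV"
  shows "u = (\<lambda>_. 0)"
proof (rule ccontr)
  assume "u \<noteq> (\<lambda>_. 0)"
  define x where "x = norm (state_vec u 0)"
  have "x > 0" using solution_eq_0_of_state_vec_0[OF rec] \<open>u \<noteq> _\<close> by (auto simp: x_def)
  define S where "S = {n. x / 8 \<le> norm (u n)}"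
  have "finite S" unfolding S_def by (rule finite_large_of_square_summable[OF l2]) (use \<open>x > 0\<close> in simp)
  then obtain N where N: "\<And>n. n \<in> S \<Longrightarrow> nat \<bar>n\<bar> < N"
    using finite_nat_bounded[of "(\<lambda>n. nat \<bar>n\<bar>) ` S"] by auto
  obtain q where q: "q \<ge> N + 1" and repeat: "\<And>n. 32 * real q * B ^ (2 * q) * norm (W (n + int q) - W n) \<le> 1"
    using W_repeat[of "N + 1"] by blast
  define \<epsilon> where "\<epsilon> = 1 / (32 * real q * B ^ (2 * q))"
  have "0 < B" using W_bound[of 0] norm_ge_zero[of "W 0"] by linarith
  then have "0 < 32 * real q * B ^ (2 * q)" using q by simp
  then have \<epsilon>: "norm (W (n + int q) - W n) \<le> \<epsilon>" and small: "32 * real q * B ^ (2 * q) * \<epsilon> \<le> 1" for n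
    using repeat[of n] by (simp_all add: \<epsilon>_def pos_le_divide_eq mult.commute)
  have far: "norm (state_vec u m) < x / 4" if "nat \<bar>m\<bar> \<ge> N" "nat \<bar>m + 1\<bar> \<ge> N" for m
  proof -
    have "m \<notin> S" "m + 1 \<notin> S" using N that by force+
    then show ?thesis
      using norm_vec_le_sum[of "state_vec u m"] by (simp add: S_def state_vec_def sum_2)
  qed
  have "x \<le> 4 * max (norm (state_vec u (int q)))
      (max (norm (state_vec u (2 * int q))) (norm (state_vec u (- int q))))"
    unfolding x_def by (rule gordon_estimate[OF rec W_bound \<epsilon> small])
  also have "\<dots> < x"
  proof -
    have "norm (state_vec u (int q)) < x / 4" "norm (state_vec u (2 * int q)) < x / 4"
      "norm (state_vec u (- int q)) < x / 4"
      by (rule far; use q in \<open>simp add: nat_le_iff\<close>)+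
    then show ?thesis by simp
  qed
  finally show False by simp
qed

lemma lipschitz_periodic_sampling_repeats:
  fixes V :: "real \<Rightarrow> real" and L B c :: real
  assumes "periodic1 V" and lipschitz: "\<And>s t. \<bar>V s - V t\<bar> \<le> L * \<bar>s - t\<bar>"
    and "\<omega> \<notin> \<rat>" and "beta_exp \<omega> > ereal c" and "0 < B" and "B\<^sup>2 < exp c"
  shows "\<exists>q\<ge>N. \<forall>\<theta> n. 32 * real q * B ^ (2 * q) *
           \<bar>V (\<theta> + real_of_int (n + int q) * \<omega>) - V (\<theta> + real_of_int n * \<omega>)\<bar> \<le> 1"
proof -
  have "0 \<le> L" using lipschitz[of 1 0] by simp
  obtain N0 where N0: "\<And>q. q \<ge> N0 \<Longrightarrow> 32 * L * real q * B ^ (2 * q) \<le> exp (c * real q)"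
    using eventually_linear_times_power_le_exp[OF \<open>0 < B\<close> \<open>B\<^sup>2 < exp c\<close>, of "32 * L"]
    unfolding eventually_sequentially by blast
  obtain q and p :: int where "q \<ge> max N N0" and p: "exp (c * real q) * \<bar>real q * \<omega> - p\<bar> \<le> 1"
    using beta_exp_good_approximations[OF \<open>\<omega> \<notin> \<rat>\<close> \<open>beta_exp \<omega> > ereal c\<close>] by blast
  have "32 * real q * B ^ (2 * q) * \<bar>V (\<theta> + real_of_int (n + int q) * \<omega>) - V (\<theta> + real_of_int n * \<omega>)\<bar> \<le> 1"
    for \<theta> n
  proof -
    define t where "t = \<theta> + real_of_int n * \<omega>"
    have "V (\<theta> + real_of_int (n + int q) * \<omega>) = V (t + (real q * \<omega> - p))"
      using periodic1_add_int[OF \<open>periodic1 V\<close>, of "t + (real q * \<omega> - p)" p]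
      by (simp add: t_def algebra_simps)
    then have "\<bar>V (\<theta> + real_of_int (n + int q) * \<omega>) - V t\<bar> \<le> L * \<bar>real q * \<omega> - p\<bar>"
      using lipschitz[of "t + (real q * \<omega> - p)" t] by simp
    then have "32 * real q * B ^ (2 * q) * \<bar>V (\<theta> + real_of_int (n + int q) * \<omega>) - V t\<bar>
        \<le> 32 * real q * B ^ (2 * q) * (L * \<bar>real q * \<omega> - p\<bar>)"
      by (rule mult_left_mono) (use \<open>0 < B\<close> in simp)
    also have "\<dots> = 32 * L * real q * B ^ (2 * q) * \<bar>real q * \<omega> - p\<bar>"
      by (simp add: mult_ac)
    also have "\<dots> \<le> exp (c * real q) * \<bar>real q * \<omega> - p\<bar>"
      using N0 \<open>q \<ge> max N N0\<close> by (intro mult_right_mono) auto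
    finally show ?thesis using p by (simp add: t_def)
  qed
  then show ?thesis using \<open>q \<ge> max N N0\<close> by auto
qed

theorem mainTheorem5:
  fixes f :: "real \<Rightarrow> real" and K \<omega> :: real
  assumes f_periodic: "periodic1 f"
    and f_analytic: "real_analytic f"
    and f_nonconst: "\<not> (\<exists>c. \<forall>x. f x = c)"
    and f_mean: "integral {0..1} f = 0"
    and f_norm: "C1_norm f = 1"
    and K_ge: "K \<ge> 1"
    and \<omega>_irr: "\<omega> \<notin> \<rat>"
    and \<beta>_large: "beta_exp \<omega> > ereal (40 * K)"
  shows "\<forall>\<theta> E. E \<in> {0 .. 4 * exp (K * sup_norm f)} \<longrightarrow> \<not> is_eigenvalue_H K f \<theta> \<omega> E"
proof (intro allI impI notI)
  fix \<theta> E assume E: "E \<in> {0 .. 4 * exp (K * sup_norm f)}" and "is_eigenvalue_H K f \<theta> \<omega> E"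
  then obtain u where "u \<noteq> (\<lambda>_. 0)" and l2: "(\<lambda>n. (norm (u n))\<^sup>2) summable_on UNIV"
    and eigen: "\<And>n. - u (n + 1) - u (n - 1) + complex_of_real (potential K f \<omega> (\<theta> + real_of_int n * \<omega>)) * u n
              = complex_of_real E * u n"
    unfolding is_eigenvalue_H_def by blast
  note f_bounds = C1_norm_eq_1_bounds[OF f_periodic f_analytic f_norm]
  define V where "V = potential K f \<omega>"
  define W where "W n = complex_of_real (V (\<theta> + real_of_int n * \<omega>) - E)" for n
  define B where "B = 4 * exp K + 2"
  have rec: "u (n + 1) + u (n - 1) = W n * u n" for n
    using eigen[of n] by (simp add: W_def V_def algebra_simps)
  have W_bound: "norm (W n) + 2 \<le> B" for n
  proof -
    have "exp (K * sup_norm f) \<le> exp K" using f_bounds(2) K_ge by simp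
    moreover have "0 < V t" "V t \<le> 2 * exp (K * sup_norm f)" for t
      unfolding V_def using potential_bounds[of f "sup_norm f" K \<omega> t] f_bounds(1) K_ge by auto
    ultimately have "\<bar>V (\<theta> + real_of_int n * \<omega>) - E\<bar> \<le> 4 * exp K"
      using E by (smt (verit) atLeastAtMost_iff)
    then show ?thesis by (simp add: W_def B_def flip: of_real_diff)
  qed
  have "B\<^sup>2 < exp (40 * K)"
  proof -
    have "B\<^sup>2 \<le> (6 * exp K)\<^sup>2" unfolding B_def using K_ge by (intro power_mono) auto
    also have "\<dots> = 36 * exp (2 * K)" by (simp add: power_mult_distrib exp_double[symmetric])
    also have "\<dots> < exp (38 * K) * exp (2 * K)"
    proof -
      have "36 < exp (38 * K)" using exp_ge_add_one_self[of "38 * K"] K_ge by linarith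
      then show ?thesis by simp
    qed
    finally show ?thesis by (simp flip: exp_add)
  qed
  have "\<bar>f y\<bar> \<le> 1" for y using f_bounds(1,2) order_trans by blast
  then have "\<bar>V s - V t\<bar> \<le> (2 * K * exp K) * \<bar>s - t\<bar>" for s t
    unfolding V_def using K_ge by (intro potential_lipschitz[OF real_analytic_C1(1)[OF f_analytic] _ f_bounds(3)]) auto
  note V_lipschitz = this
  have "0 < B" by (simp add: B_def add_pos_pos)
  have "\<exists>q\<ge>N. \<forall>n. 32 * real q * B ^ (2 * q) * norm (W (n + int q) - W n) \<le> 1" for N
  proof -
    obtain q where "q \<ge> N" and q: "\<And>\<theta>' n. 32 * real q * B ^ (2 * q) *
        \<bar>V (\<theta>' + real_of_int (n + int q) * \<omega>) - V (\<theta>' + real_of_int n * \<omega>)\<bar> \<le> 1"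
      using lipschitz_periodic_sampling_repeats[OF periodic1_potential[OF f_periodic, where K = K and \<omega> = \<omega>,
          folded V_def] V_lipschitz \<omega>_irr \<beta>_large \<open>0 < B\<close> \<open>B\<^sup>2 < exp (40 * K)\<close>]
      by blast
    then show ?thesis using q[of \<theta>] by (auto simp: W_def simp flip: of_real_diff)
  qed
  then have "u = (\<lambda>_. 0)" by (rule gordon_no_square_summable_solution[OF rec W_bound _ l2])
  with \<open>u \<noteq> (\<lambda>_. 0)\<close> show False ..
qed

end
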